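(* Let $\alpha>0,\lambda>0$ and $\beta\in\mathbb{R}$ with $\alpha+\beta>0$. Let $X$ be a strictly positive random variable with $\mathbb{E}[X^\beta]<\infty$. Then for every $\tau\in(0,1)$, $\mathbb{E}[X_\tau^\beta]<\infty$ and $$\mathbb{E}[X_\tau^\beta]=\Big(\frac{\lambda}{1-\tau}\Big)^{-\beta}\frac{\Gamma(\alpha+\beta)}{\Gamma(\alpha)}\int_0^\infty e^{-\frac{\lambda\tau x}{1-\tau}}\,{}_1F_1\Big(\alpha+\beta;\alpha;\frac{\lambda\tau x}{1-\tau}\Big)\mathbb{P}_X(dx),$$ where ${}_1F_1$ is Kummer's confluent hypergeometric function.
   Context: $\mathbb{P}_X$ is the law of $X$. For $\tau\in(0,1)$, the gamma smart path $X_\tau$ is defined as follows: conditionally on $X=x$, let $K$ be Poisson with mean $\lambda\tau x/(1-\tau)$; conditionally on $X=x,K=k$, let $Y=0$ if $k=0$ and let $Y$ be gamma distributed with shape $k$ and rate $\lambda\tau/(1-\tau)$ if $k\ge1$; let $\gamma(\alpha,\lambda)$ be a random variable with density $\frac{\lambda^\alpha}{\Gamma(\alpha)}u^{\alpha-1}e^{-\lambda u}$ independent of $(X,K,Y)$; set $X_\tau=(1-\tau)\gamma(\alpha,\lambda)+\tau Y$. *)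

theory Defs
  imports "HOL-Probability.Probability"
begin

definition gamma_density :: "real \<Rightarrow> real \<Rightarrow> real \<Rightarrow> real" where
  "gamma_density a l u =
     (if u > 0 then l powr a / Gamma a * u powr (a - 1) * exp (- l * u) else 0)"

definition gamma_measure :: "real \<Rightarrow> real \<Rightarrow> real measure" where
  "gamma_measure a l = density lborel (\<lambda>u. ennreal (gamma_density a l u))"

definition poisson_measure :: "real \<Rightarrow> nat measure" where
  "poisson_measure r = density (count_space UNIV) (\<lambda>k. ennreal (r ^ k / fact k * exp (- r)))"

definition kummer_1F1 :: "real \<Rightarrow> real \<Rightarrow> real \<Rightarrow> real" where
  "kummer_1F1 a b z = (\<Sum>n. pochhammer a n / pochhammer b n * z ^ n / fact n)"

text \<open>Law of the gamma smart path X_tau, given the law PX of X: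
  draw x from PX, K ~ Poisson(lambda tau x/(1-tau)), Y = 0 if K = 0 and
  Y ~ Gamma(K, lambda tau/(1-tau)) otherwise, an independent G ~ Gamma(alpha, lambda),
  and return (1-tau) G + tau Y.\<close>
definition smart_path_law :: "real \<Rightarrow> real \<Rightarrow> real \<Rightarrow> real measure \<Rightarrow> real measure" where
  "smart_path_law \<alpha> lam \<tau> PX =
     PX \<bind> (\<lambda>x.
       poisson_measure (lam * \<tau> * x / (1 - \<tau>)) \<bind> (\<lambda>k.
         (if k = 0 then return borel 0 else gamma_measure (real k) (lam * \<tau> / (1 - \<tau>))) \<bind> (\<lambda>y.
           gamma_measure \<alpha> lam \<bind> (\<lambda>g.
             return borel ((1 - \<tau>) * g + \<tau> * y)))))"

end

theory Submission
  imports Defs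
begin

text \<open>Conditionally on \<open>K = k\<close>, the path \<open>(1 - \<tau>) G + \<tau> Y\<close> is a sum of independent Gamma
  variables with the common rate \<open>r = \<lambda> / (1 - \<tau>)\<close>, hence Gamma distributed with shape \<open>\<alpha> + k\<close>
  and rate \<open>r\<close>. Its \<open>\<beta>\<close>-th moment \<open>r powr (-\<beta>) * \<Gamma>(\<alpha> + k + \<beta>) / \<Gamma>(\<alpha> + k)\<close> is
  \<open>r powr (-\<beta>) * \<Gamma>(\<alpha> + \<beta>) / \<Gamma>(\<alpha>)\<close> times \<open>(\<alpha> + \<beta>)\<^sub>k / (\<alpha>)\<^sub>k\<close>, so averaging over
  the Poisson weights \<open>exp (- m) * m ^ k / k!\<close> gives exactly \<open>exp (- m) * \<^sub>1F\<^sub>1(\<alpha> + \<beta>; \<alpha>; m)\<close>.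
  For integrability, the bound \<open>u powr \<beta> \<le> t powr \<beta> + t powr (\<beta> - q) * u ^ q\<close> with an integer
  \<open>q \<ge> \<beta>\<close> and \<open>t\<close> of the order of \<open>m\<close> shows that this mixed moment is \<open>O(1 + m powr \<beta>)\<close>;
  as \<open>m\<close> is proportional to \<open>x\<close>, it is integrable against the law of \<open>X\<close> when \<open>E[X powr \<beta>] < \<infinity>\<close>.\<close>

section \<open>Gamma distributions\<close>

lemma sets_gamma_measure [simp, measurable_cong]: "sets (gamma_measure s l) = sets borel"
  by (simp add: gamma_measure_def)

lemma space_gamma_measure [simp]: "space (gamma_measure s l) = UNIV"
  by (simp add: gamma_measure_def)

lemma borel_measurable_gamma_density [measurable]: "gamma_density s l \<in> borel_measurable borel"
  unfolding gamma_density_def by measurable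

lemma gamma_density_nonneg: "0 < s \<Longrightarrow> 0 \<le> gamma_density s l u"
  by (simp add: gamma_density_def)

lemma nn_integral_gamma_measure:
  assumes "f \<in> borel_measurable borel"
  shows "(\<integral>\<^sup>+u. f u \<partial>gamma_measure s l) = (\<integral>\<^sup>+u. ennreal (gamma_density s l u) * f u \<partial>lborel)"
  unfolding gamma_measure_def using assms by (simp add: nn_integral_density)

lemma AE_gamma_measure_pos: "AE u in gamma_measure s l. 0 < u"
  unfolding gamma_measure_def by (subst AE_density) (auto simp: gamma_density_def)

lemma borel_measurable_nn_integral_gamma_measure:
  assumes [measurable]: "case_prod f \<in> borel_measurable (borel \<Otimes>\<^sub>M borel)"
  shows "(\<lambda>x. \<integral>\<^sup>+y. f x y \<partial>gamma_measure s l) \<in> borel_measurable borel"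
  by (simp add: nn_integral_gamma_measure)

lemma gamma_density_mult:
  assumes "0 < c" "0 < l"
  shows "c * gamma_density s (l / c) (c * x) = gamma_density s l x"
proof (cases "0 < x")
  case True
  have "c * ((l / c) powr s * (c * x) powr (s - 1)) = l powr s * x powr (s - 1)"
    using assms True by (simp add: powr_mult powr_divide powr_diff field_simps)
  with True assms show ?thesis
    unfolding gamma_density_def by (simp add: zero_less_mult_iff)
qed (use assms in \<open>auto simp: gamma_density_def zero_less_mult_iff\<close>)

lemma nn_integral_gamma_measure_mult:
  assumes "0 < c" "0 < l" and [measurable]: "f \<in> borel_measurable borel"
  shows "(\<integral>\<^sup>+u. f (c * u) \<partial>gamma_measure s l) = (\<integral>\<^sup>+u. f u \<partial>gamma_measure s (l / c))"
proof -
  have "(\<integral>\<^sup>+u. f u \<partial>gamma_measure s (l / c))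
      = ennreal c * (\<integral>\<^sup>+u. ennreal (gamma_density s (l / c) (c * u)) * f (c * u) \<partial>lborel)"
    using nn_integral_real_affine[of "\<lambda>u. ennreal (gamma_density s (l / c) u) * f u" c 0] assms
    by (simp add: nn_integral_gamma_measure)
  also have "\<dots> = (\<integral>\<^sup>+u. ennreal (gamma_density s l u) * f (c * u) \<partial>lborel)"
    using assms
    by (subst nn_integral_cmult[symmetric])
       (auto simp: mult.assoc[symmetric] ennreal_mult'[symmetric] gamma_density_mult)
  finally show ?thesis
    by (simp add: nn_integral_gamma_measure)
qed

lemma nn_integral_gamma_measure_powr:
  assumes s: "0 < s" and l: "0 < l" and sb: "0 < s + b"
  shows "(\<integral>\<^sup>+u. ennreal (u powr b) \<partial>gamma_measure s l) = ennreal (l powr (-b) * Gamma (s + b) / Gamma s)"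
proof -
  have "(\<integral>\<^sup>+u. ennreal (u powr b) \<partial>gamma_measure s 1)
      = (\<integral>\<^sup>+u. ennreal (1 / Gamma s) * ennreal (indicator {0..} u * u powr (s + b - 1) / exp u) \<partial>lborel)"
    using s
    by (auto simp: nn_integral_gamma_measure gamma_density_def indicator_def ennreal_mult'[symmetric]
          powr_add[symmetric] exp_minus field_simps intro!: nn_integral_cong)
  also have "\<dots> = ennreal (1 / Gamma s) * ennreal (Gamma (s + b))"
    using sb by (simp add: nn_integral_cmult Gamma_conv_nn_integral_real)
  also have "\<dots> = ennreal (Gamma (s + b) / Gamma s)"
    using s by (simp add: ennreal_mult'[symmetric])
  finally have unit: "(\<integral>\<^sup>+u. ennreal (u powr b) \<partial>gamma_measure s 1) = ennreal (Gamma (s + b) / Gamma s)" .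
  have "(\<integral>\<^sup>+u. ennreal (u powr b) \<partial>gamma_measure s l)
      = (\<integral>\<^sup>+u. ennreal ((u / l) powr b) \<partial>gamma_measure s 1)"
    using nn_integral_gamma_measure_mult[of "1 / l" 1 "\<lambda>u. ennreal (u powr b)" s] l by simp
  also have "\<dots> = ennreal (l powr (-b)) * (\<integral>\<^sup>+u. ennreal (u powr b) \<partial>gamma_measure s 1)"
    using l by (subst nn_integral_cmult[symmetric])
      (auto intro!: nn_integral_cong simp: ennreal_mult'[symmetric] powr_divide powr_minus field_simps)
  finally show ?thesis
    using s sb by (simp add: unit ennreal_mult'[symmetric] mult.assoc)
qed

lemma prob_space_gamma_measure:
  assumes "0 < s" "0 < l"
  shows "prob_space (gamma_measure s l)"
proof
  have "emeasure (gamma_measure s l) (space (gamma_measure s l)) = (\<integral>\<^sup>+u. 1 \<partial>gamma_measure s l)"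
    by simp
  also have "\<dots> = (\<integral>\<^sup>+u. ennreal (u powr 0) \<partial>gamma_measure s l)"
    by (subst (1 2) nn_integral_gamma_measure) (auto intro!: nn_integral_cong simp: gamma_density_def)
  also have "\<dots> = ennreal (l powr (- 0) * Gamma (s + 0) / Gamma s)"
    by (rule nn_integral_gamma_measure_powr) (use assms in auto)
  also have "\<dots> = 1"
    using assms by (simp add: Gamma_real_pos_exp)
  finally show "emeasure (gamma_measure s l) (space (gamma_measure s l)) = 1" .
qed

lemma gamma_measure_in_subprob_algebra:
  "0 < s \<Longrightarrow> 0 < l \<Longrightarrow> gamma_measure s l \<in> space (subprob_algebra borel)"
  by (simp add: space_subprob_algebra prob_space_gamma_measure prob_space_imp_subprob_space)

lemma gamma_density_product_scaled:
  assumes s: "0 < s" and k: "0 < k" and v: "0 < v"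
  shows "v * (gamma_density k r (v * t) * gamma_density s r (v - v * t))
       = Gamma (s + k) / (Gamma s * Gamma k) * gamma_density (s + k) r v
         * (indicator {0..1} t * (t powr (k - 1) * (1 - t) powr (s - 1)))"
proof (cases "0 < t \<and> t < 1")
  case True
  then have t: "0 < t" "0 < 1 - t" by auto
  have gk: "gamma_density k r (v * t) = r powr k / Gamma k * (v powr (k - 1) * t powr (k - 1)) * exp (- r * (v * t))"
    using t v by (simp add: gamma_density_def powr_mult)
  have "v - v * t = v * (1 - t)" by (simp add: algebra_simps)
  then have gs: "gamma_density s r (v - v * t) = r powr s / Gamma s * (v powr (s - 1) * (1 - t) powr (s - 1)) * exp (- r * (v * (1 - t)))"
    using t v by (simp add: gamma_density_def powr_mult)
  have "v * (gamma_density k r (v * t) * gamma_density s r (v - v * t))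
      = (r powr k * r powr s) / (Gamma s * Gamma k) * (v * v powr (k - 1) * v powr (s - 1))
        * (exp (- r * (v * t)) * exp (- r * (v * (1 - t)))) * (t powr (k - 1) * (1 - t) powr (s - 1))"
    unfolding gk gs by (simp add: mult_ac)
  also have "r powr k * r powr s = r powr (s + k)"
    by (simp add: powr_add add.commute)
  also have "v * v powr (k - 1) * v powr (s - 1) = v powr (s + k - 1)"
    using v by (simp add: powr_add[symmetric] powr_diff add_ac)
  also have "exp (- r * (v * t)) * exp (- r * (v * (1 - t))) = exp (- r * v)"
    by (simp add: exp_add[symmetric] algebra_simps)
  finally have eq: "v * (gamma_density k r (v * t) * gamma_density s r (v - v * t))
      = r powr (s + k) / (Gamma s * Gamma k) * v powr (s + k - 1) * exp (- r * v)
        * (t powr (k - 1) * (1 - t) powr (s - 1))" .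
  have "gamma_density (s + k) r v = r powr (s + k) / Gamma (s + k) * v powr (s + k - 1) * exp (- r * v)"
    using v by (simp add: gamma_density_def)
  then show ?thesis
    unfolding eq using t s k by (simp add: Gamma_real_pos_exp)
next
  case False
  then have "t \<le> 0 \<or> 1 \<le> t" by auto
  then show ?thesis
    using v by (auto simp: gamma_density_def indicator_def zero_less_mult_iff)
qed

lemma nn_integral_gamma_density_convolution:
  assumes s: "0 < s" and k: "0 < k"
  shows "(\<integral>\<^sup>+y. ennreal (gamma_density k r y * gamma_density s r (v - y)) \<partial>lborel)
       = ennreal (gamma_density (s + k) r v)"
proof (cases "0 < v")
  case v: True
  define C where "C = Gamma (s + k) / (Gamma s * Gamma k) * gamma_density (s + k) r v"
  have C: "0 \<le> C"
    using s k by (simp add: C_def gamma_density_nonneg)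
  \<comment> \<open>The substitution \<open>y = v * t\<close> turns the convolution integral into a Beta integral.\<close>
  have "(\<integral>\<^sup>+y. ennreal (gamma_density k r y * gamma_density s r (v - y)) \<partial>lborel)
      = ennreal v * (\<integral>\<^sup>+t. ennreal (gamma_density k r (v * t) * gamma_density s r (v - v * t)) \<partial>lborel)"
    using nn_integral_real_affine[of "\<lambda>y. ennreal (gamma_density k r y * gamma_density s r (v - y))" v 0] v
    by simp
  also have "\<dots> = (\<integral>\<^sup>+t. ennreal (v * (gamma_density k r (v * t) * gamma_density s r (v - v * t))) \<partial>lborel)"
    using v by (simp add: nn_integral_cmult[symmetric] ennreal_mult')
  also have "\<dots> = (\<integral>\<^sup>+t. ennreal C * (ennreal (t powr (k - 1) * (1 - t) powr (s - 1)) * indicator {0..1} t) \<partial>lborel)"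
    using gamma_density_product_scaled[OF s k v, where r = r, folded C_def]
    by (intro nn_integral_cong) (simp add: ennreal_mult[OF C] split: split_indicator)
  also have "\<dots> = ennreal C * ennreal (Beta k s)"
    using has_integral_Beta_real[OF k s]
    by (simp add: nn_integral_cmult nn_integral_has_integral_lebesgue')
  also have "\<dots> = ennreal (gamma_density (s + k) r v)"
    using s k gamma_density_nonneg[of "s + k" r v]
    by (simp add: C_def Beta_def ennreal_mult'[symmetric] Gamma_real_pos_exp add.commute)
  finally show ?thesis .
next
  case False
  then have "(\<lambda>y. ennreal (gamma_density k r y * gamma_density s r (v - y))) = (\<lambda>y. 0)"
    by (auto simp: gamma_density_def)
  moreover have "gamma_density (s + k) r v = 0"
    using False by (simp add: gamma_density_def)
  ultimately show ?thesis
    by simp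
qed

lemma nn_integral_gamma_measure_convolution:
  assumes s: "0 < s" and k: "0 < k" and [measurable]: "f \<in> borel_measurable borel"
  shows "(\<integral>\<^sup>+y. \<integral>\<^sup>+u. f (u + y) \<partial>gamma_measure s r \<partial>gamma_measure k r)
       = (\<integral>\<^sup>+v. f v \<partial>gamma_measure (s + k) r)"
proof -
  have translate: "(\<integral>\<^sup>+u. f (u + y) \<partial>gamma_measure s r)
      = (\<integral>\<^sup>+v. ennreal (gamma_density s r (v - y)) * f v \<partial>lborel)" for y
    using nn_integral_real_affine[of "\<lambda>v. ennreal (gamma_density s r (v - y)) * f v" 1 y]
    by (simp add: nn_integral_gamma_measure add.commute)
  have "(\<integral>\<^sup>+y. \<integral>\<^sup>+u. f (u + y) \<partial>gamma_measure s r \<partial>gamma_measure k r)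
      = (\<integral>\<^sup>+y. \<integral>\<^sup>+v. ennreal (gamma_density k r y * gamma_density s r (v - y)) * f v \<partial>lborel \<partial>lborel)"
    using s k
    by (simp add: translate nn_integral_gamma_measure nn_integral_cmult[symmetric] ennreal_mult' gamma_density_nonneg
        mult.assoc)
  also have "\<dots> = (\<integral>\<^sup>+v. \<integral>\<^sup>+y. ennreal (gamma_density k r y * gamma_density s r (v - y)) * f v \<partial>lborel \<partial>lborel)"
    by (rule lborel_pair.Fubini') measurable
  also have "\<dots> = (\<integral>\<^sup>+v. ennreal (gamma_density (s + k) r v) * f v \<partial>lborel)"
    using s k by (simp add: nn_integral_multc nn_integral_gamma_density_convolution)
  finally show ?thesis
    by (simp add: nn_integral_gamma_measure)
qed

lemma bind_gamma_measure_return_mult: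
  assumes p: "0 < p" and r: "0 < r"
  shows "gamma_measure a (p * r) \<bind> (\<lambda>g. return borel (p * g)) = gamma_measure a r"
proof (rule measure_eqI)
  have distr: "gamma_measure a (p * r) \<bind> (\<lambda>g. return borel (p * g)) = distr (gamma_measure a (p * r)) borel ((*) p)"
    by (rule bind_return_distr') auto
  show "sets (gamma_measure a (p * r) \<bind> (\<lambda>g. return borel (p * g))) = sets (gamma_measure a r)"
    by (simp add: distr)
  fix A :: "real set" assume "A \<in> sets (gamma_measure a (p * r) \<bind> (\<lambda>g. return borel (p * g)))"
  then have [measurable]: "A \<in> sets borel"
    by (simp add: distr)
  have "emeasure (gamma_measure a (p * r) \<bind> (\<lambda>g. return borel (p * g))) A
      = (\<integral>\<^sup>+g. indicator A (p * g) \<partial>gamma_measure a (p * r))"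
    by (simp add: distr nn_integral_indicator[symmetric] nn_integral_distr del: nn_integral_indicator)
  also have "\<dots> = (\<integral>\<^sup>+g. indicator A g \<partial>gamma_measure a r)"
    using nn_integral_gamma_measure_mult[of p "p * r" "indicator A" a] p r by simp
  finally show "emeasure (gamma_measure a (p * r) \<bind> (\<lambda>g. return borel (p * g))) A = emeasure (gamma_measure a r) A"
    by simp
qed

lemma bind_gamma_measure_affine:
  assumes a: "0 < a" and b: "0 < b" and p: "0 < p" and q: "0 < q" and r: "0 < r"
  shows "gamma_measure b (q * r) \<bind> (\<lambda>y. gamma_measure a (p * r) \<bind> (\<lambda>g. return borel (p * g + q * y)))
       = gamma_measure (a + b) r" (is "?M = _")
proof -
  have inner: "gamma_measure a (p * r) \<bind> (\<lambda>g. return borel (p * g + q * y))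
      = distr (gamma_measure a (p * r)) borel (\<lambda>g. p * g + q * y)" for y
    by (rule bind_return_distr') auto
  have kernel: "(\<lambda>y. distr (gamma_measure a (p * r)) borel (\<lambda>g. p * g + q * y))
      \<in> gamma_measure b (q * r) \<rightarrow>\<^sub>M subprob_algebra borel"
    using gamma_measure_in_subprob_algebra[of a "p * r"] a p r
    by (intro measurable_distr2[where M = borel]) auto
  have M: "?M = gamma_measure b (q * r) \<bind> (\<lambda>y. distr (gamma_measure a (p * r)) borel (\<lambda>g. p * g + q * y))"
    by (simp add: inner)
  show ?thesis
  proof (rule measure_eqI)
    show "sets ?M = sets (gamma_measure (a + b) r)"
      unfolding M by (simp add: sets_bind_measurable[OF kernel])
    fix A :: "real set" assume "A \<in> sets ?M"
    then have [measurable]: "A \<in> sets borel"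
      unfolding M by (simp add: sets_bind_measurable[OF kernel])
    have "emeasure ?M A = (\<integral>\<^sup>+y. \<integral>\<^sup>+g. indicator A (p * g + q * y) \<partial>gamma_measure a (p * r) \<partial>gamma_measure b (q * r))"
      unfolding M emeasure_bind[OF _ kernel \<open>A \<in> sets borel\<close>, simplified]
      by (intro nn_integral_cong) (simp add: nn_integral_indicator[symmetric] nn_integral_distr del: nn_integral_indicator)
    also have "\<dots> = (\<integral>\<^sup>+y. \<integral>\<^sup>+u. indicator A (u + q * y) \<partial>gamma_measure a r \<partial>gamma_measure b (q * r))"
      using nn_integral_gamma_measure_mult[of p "p * r" "\<lambda>u. indicator A (u + q * _)" a] p r by simp
    also have "\<dots> = (\<integral>\<^sup>+y. \<integral>\<^sup>+u. indicator A (u + y) \<partial>gamma_measure a r \<partial>gamma_measure b r)"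
      using nn_integral_gamma_measure_mult[of q "q * r" "\<lambda>y. \<integral>\<^sup>+u. indicator A (u + y) \<partial>gamma_measure a r" b] q r
      by (simp add: borel_measurable_nn_integral_gamma_measure)
    also have "\<dots> = emeasure (gamma_measure (a + b) r) A"
      using a b by (simp add: nn_integral_gamma_measure_convolution)
    finally show "emeasure ?M A = emeasure (gamma_measure (a + b) r) A" .
  qed
qed

section \<open>Poisson weights\<close>

definition poisson_weight :: "real \<Rightarrow> nat \<Rightarrow> real" where
  "poisson_weight r k = r ^ k / fact k * exp (- r)"

lemma sets_poisson_measure [simp, measurable_cong]: "sets (poisson_measure r) = sets (count_space UNIV)"
  by (simp add: poisson_measure_def)

lemma space_poisson_measure [simp]: "space (poisson_measure r) = UNIV"
  by (simp add: poisson_measure_def)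

lemma nn_integral_poisson_measure:
  "(\<integral>\<^sup>+k. f k \<partial>poisson_measure r) = (\<Sum>k. ennreal (poisson_weight r k) * f k)"
  by (simp add: poisson_measure_def poisson_weight_def nn_integral_density nn_integral_count_space_nat)

lemma poisson_weight_nonneg: "0 \<le> r \<Longrightarrow> 0 \<le> poisson_weight r k"
  by (simp add: poisson_weight_def)

lemma poisson_weight_sums: "poisson_weight r sums 1"
proof -
  have "(\<lambda>k. r ^ k / fact k) sums exp r"
    using exp_converges[of r] by (simp add: field_simps)
  from sums_mult2[OF this, of "exp (- r)"] show ?thesis
    by (simp add: poisson_weight_def[abs_def] exp_minus[symmetric] mult_exp_exp mult_ac)
qed

lemma suminf_poisson_weight: "0 \<le> r \<Longrightarrow> (\<Sum>k. ennreal (poisson_weight r k)) = 1"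
  using suminf_ennreal_eq[OF poisson_weight_nonneg poisson_weight_sums] by simp

lemma prob_space_poisson_measure: "0 \<le> r \<Longrightarrow> prob_space (poisson_measure r)"
  by (rule prob_spaceI) (simp add: nn_integral_poisson_measure[where f = "\<lambda>_. 1", simplified] suminf_poisson_weight)

text \<open>With a negative mean the weights of odd \<open>k\<close> are truncated to \<open>0\<close> by \<open>ennreal\<close>, and the
  total mass is \<open>exp (- r) * cosh r > 1\<close>.\<close>
lemma emeasure_poisson_measure_gt_1:
  assumes "r < 0"
  shows "1 < emeasure (poisson_measure r) UNIV"
proof -
  have "ennreal (exp (- r)) = (\<Sum>k<1. ennreal (poisson_weight r k))"
    by (simp add: poisson_weight_def)
  also have "\<dots> \<le> (\<Sum>k. ennreal (poisson_weight r k))"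
    by (rule sum_le_suminf) auto
  also have "\<dots> = emeasure (poisson_measure r) UNIV"
    using nn_integral_poisson_measure[where f = "\<lambda>_. 1" and r = r] by simp
  finally show ?thesis
    using assms by (simp add: less_le_trans[of 1 "ennreal (exp (- r))"] ennreal_less_iff)
qed

lemma measurable_poisson_measure:
  assumes [measurable]: "f \<in> borel_measurable M" and "\<And>x. x \<in> space M \<Longrightarrow> 0 \<le> f x"
  shows "(\<lambda>x. poisson_measure (f x)) \<in> M \<rightarrow>\<^sub>M subprob_algebra (count_space UNIV)"
proof (rule measurable_subprob_algebra)
  show "subprob_space (poisson_measure (f x))" if "x \<in> space M" for x
    using assms(2)[OF that] by (simp add: prob_space_poisson_measure prob_space_imp_subprob_space)
  show "(\<lambda>x. emeasure (poisson_measure (f x)) A) \<in> borel_measurable M" for A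
    using nn_integral_poisson_measure[where f = "indicator A"] by (simp add: poisson_weight_def)
qed simp

lemma poisson_weight_Suc: "real (Suc k) * poisson_weight r (Suc k) = r * poisson_weight r k"
  by (simp add: poisson_weight_def field_simps del: of_nat_Suc)

lemma suminf_poisson_weight_mult_index:
  assumes m: "0 \<le> m"
  shows "(\<Sum>k. ennreal (real k * poisson_weight m k * f k))
       = ennreal m * (\<Sum>k. ennreal (poisson_weight m k * f (Suc k)))"
proof -
  have "(\<Sum>k. ennreal (real k * poisson_weight m k * f k))
      = (\<Sum>k. ennreal (real (Suc k) * poisson_weight m (Suc k) * f (Suc k)))"
    using suminf_offset[of "\<lambda>k. ennreal (real k * poisson_weight m k * f k)" 1] by auto
  also have "\<dots> = (\<Sum>k. ennreal m * ennreal (poisson_weight m k * f (Suc k)))"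
    using m by (simp add: poisson_weight_Suc ennreal_mult'[symmetric] mult.assoc del: of_nat_Suc)
  finally show ?thesis
    by simp
qed

lemma suminf_poisson_weight_power_le:
  assumes m: "0 \<le> m" and c: "0 \<le> c"
  shows "(\<Sum>k. ennreal (poisson_weight m k * (real k + c) ^ q)) \<le> ennreal ((m + c + real q) ^ q)"
  using c
proof (induction q arbitrary: c)
  case 0
  then show ?case
    using suminf_poisson_weight[OF m] by simp
next
  case (Suc q)
  \<comment> \<open>\<open>E[(K + c) ^ Suc q] = c * E[(K + c) ^ q] + E[K * (K + c) ^ q]\<close>, and \<open>E[K * f K] = m * E[f (K + 1)]\<close>.\<close>
  have w: "0 \<le> poisson_weight m k" for k
    using m by (rule poisson_weight_nonneg)
  have split: "ennreal (poisson_weight m k * (real k + c) ^ Suc q)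
      = ennreal c * ennreal (poisson_weight m k * (real k + c) ^ q)
        + ennreal (real k * poisson_weight m k * (real k + c) ^ q)" for k
    using Suc.prems w[of k] by (simp add: algebra_simps ennreal_mult'[symmetric] ennreal_plus[symmetric] del: ennreal_plus)
  have "(\<Sum>k. ennreal (poisson_weight m k * (real k + c) ^ Suc q))
      = (\<Sum>k. ennreal c * ennreal (poisson_weight m k * (real k + c) ^ q))
        + (\<Sum>k. ennreal (real k * poisson_weight m k * (real k + c) ^ q))"
    unfolding split by (rule suminf_add[symmetric]) auto
  also have "\<dots> = ennreal c * (\<Sum>k. ennreal (poisson_weight m k * (real k + c) ^ q))
        + ennreal m * (\<Sum>k. ennreal (poisson_weight m k * (real k + (c + 1)) ^ q))"
    using Suc.prems by (subst suminf_poisson_weight_mult_index[OF m]) (simp_all add: add_ac)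
  also have "\<dots> \<le> ennreal c * ennreal ((m + c + real q) ^ q) + ennreal m * ennreal ((m + (c + 1) + real q) ^ q)"
    using Suc.IH[of c] Suc.IH[of "c + 1"] Suc.prems by (intro add_mono mult_left_mono) auto
  also have "\<dots> \<le> ennreal ((m + c + real (Suc q)) ^ Suc q)"
  proof -
    have "c * (m + c + real q) ^ q + m * (m + (c + 1) + real q) ^ q \<le> (c + m) * (m + c + real (Suc q)) ^ q"
      using Suc.prems m by (auto simp: algebra_simps intro!: mult_left_mono power_mono)
    also have "\<dots> \<le> (m + c + real (Suc q)) ^ Suc q"
      using Suc.prems m by (auto intro!: mult_right_mono)
    finally show ?thesis
      using Suc.prems m by (simp add: ennreal_mult'[symmetric] ennreal_plus[symmetric] del: ennreal_plus)
  qed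
  finally show ?case .
qed

section \<open>Gamma ratios and Kummer's function\<close>

lemma Gamma_ratio_shift:
  assumes a: "0 < a" and ab: "0 < a + b"
  shows "Gamma (a + real k + b) / Gamma (a + real k)
       = Gamma (a + b) / Gamma a * (pochhammer (a + b) k / pochhammer a k)"
proof -
  have "pochhammer z k = Gamma (z + real k) / Gamma z" if "0 < z" for z :: real
    using that by (simp add: pochhammer_Gamma nonpos_Ints_def)
  with a ab show ?thesis
    by (simp add: Gamma_real_pos_exp add_ac)
qed

lemma powr_le_powr_plus_powr:
  fixes u t b :: real
  assumes u: "0 \<le> u" and t: "0 < t" and b: "0 \<le> b" "b \<le> q"
  shows "u powr b \<le> t powr b + t powr b / t powr q * u powr q"
proof (cases "u \<le> t")
  case True
  then have "u powr b \<le> t powr b"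
    using u b by (intro powr_mono2) auto
  then show ?thesis
    using t u by (simp add: add_increasing2)
next
  case False
  then have "1 \<le> u / t"
    using t by simp
  then have "t powr b * (u / t) powr b \<le> t powr b * (u / t) powr q"
    using b by (intro mult_left_mono powr_mono) auto
  then show ?thesis
    using t u by (simp add: powr_divide add_increasing)
qed

lemma Gamma_ratio_le:
  fixes s t b q :: real
  assumes s: "0 < s" and t: "0 < t" and b: "0 \<le> b" "b \<le> q"
  shows "Gamma (s + b) / Gamma s \<le> t powr b + t powr b / t powr q * (Gamma (s + q) / Gamma s)"
proof -
  interpret prob_space "gamma_measure s 1"
    using s by (simp add: prob_space_gamma_measure)
  have "ennreal (Gamma (s + b) / Gamma s) = (\<integral>\<^sup>+u. ennreal (u powr b) \<partial>gamma_measure s 1)"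
    using s b by (simp add: nn_integral_gamma_measure_powr)
  also have "\<dots> \<le> (\<integral>\<^sup>+u. ennreal (t powr b) + ennreal (t powr b / t powr q) * ennreal (u powr q) \<partial>gamma_measure s 1)"
  proof (intro nn_integral_mono_AE eventually_mono[OF AE_gamma_measure_pos])
    fix u :: real assume "0 < u"
    then have "u powr b \<le> t powr b + t powr b / t powr q * u powr q"
      using powr_le_powr_plus_powr[OF _ t b] by simp
    then show "ennreal (u powr b) \<le> ennreal (t powr b) + ennreal (t powr b / t powr q) * ennreal (u powr q)"
      by (simp add: ennreal_mult'[symmetric] ennreal_plus[symmetric] del: ennreal_plus)
  qed
  also have "\<dots> = ennreal (t powr b) + ennreal (t powr b / t powr q) * ennreal (Gamma (s + q) / Gamma s)"
    using s b by (simp add: nn_integral_add nn_integral_cmult emeasure_space_1[simplified] nn_integral_gamma_measure_powr)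
  also have "\<dots> = ennreal (t powr b + t powr b / t powr q * (Gamma (s + q) / Gamma s))"
    using s b by (simp add: ennreal_mult'[symmetric] ennreal_plus[symmetric] del: ennreal_plus)
  finally show ?thesis
    using s b by (subst (asm) ennreal_le_iff) auto
qed

lemma pochhammer_le_power:
  fixes s :: real
  assumes "0 \<le> s"
  shows "pochhammer s q \<le> (s + real q) ^ q"
proof -
  have "pochhammer s q = (\<Prod>i<q. s + real i)"
    by (simp add: pochhammer_prod atLeast0LessThan)
  also have "\<dots> \<le> (\<Prod>i<q. s + real q)"
    using assms by (intro prod_mono) auto
  finally show ?thesis
    by simp
qed

lemma suminf_poisson_weight_Gamma_ratio_le_powr:
  assumes a: "0 < a" and b: "0 \<le> b" "b \<le> real q" and m: "0 \<le> m"
  shows "(\<Sum>k. ennreal (poisson_weight m k * (Gamma (a + real k + b) / Gamma (a + real k))))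
       \<le> ennreal (2 * (m + a + 2 * real q) powr b)"
proof -
  \<comment> \<open>This \<open>t\<close> bounds \<open>E[(K + a + q) ^ q]\<close> by \<open>t ^ q\<close>, so both terms of the interpolation are \<open>t powr b\<close>.\<close>
  define t where "t = m + a + 2 * real q"
  have t: "0 < t"
    using a m by (simp add: t_def)
  have w: "0 \<le> poisson_weight m k" for k
    using m by (rule poisson_weight_nonneg)
  have ratio: "Gamma (a + real k + b) / Gamma (a + real k)
      \<le> t powr b + t powr b / t ^ q * (real k + (a + real q)) ^ q" for k
  proof -
    have "Gamma (a + real k + real q) / Gamma (a + real k) = pochhammer (a + real k) q"
      using a by (simp add: pochhammer_Gamma nonpos_Ints_def)
    also have "\<dots> \<le> (real k + (a + real q)) ^ q"
      using pochhammer_le_power[of "a + real k" q] a by (simp add: add_ac)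
    finally have "t powr b / t ^ q * (Gamma (a + real k + real q) / Gamma (a + real k))
        \<le> t powr b / t ^ q * (real k + (a + real q)) ^ q"
      using t by (intro mult_left_mono) auto
    with Gamma_ratio_le[of "a + real k" t b "real q"] a t b show ?thesis
      by (simp add: powr_realpow)
  qed
  have "(\<Sum>k. ennreal (poisson_weight m k * (Gamma (a + real k + b) / Gamma (a + real k))))
      \<le> (\<Sum>k. ennreal (t powr b) * ennreal (poisson_weight m k)
             + ennreal (t powr b / t ^ q) * ennreal (poisson_weight m k * (real k + (a + real q)) ^ q))"
  proof (rule suminf_le)
    fix k
    have "poisson_weight m k * (Gamma (a + real k + b) / Gamma (a + real k))
        \<le> t powr b * poisson_weight m k + t powr b / t ^ q * (poisson_weight m k * (real k + (a + real q)) ^ q)"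
      using mult_left_mono[OF ratio w] by (simp add: algebra_simps)
    then show "ennreal (poisson_weight m k * (Gamma (a + real k + b) / Gamma (a + real k)))
        \<le> ennreal (t powr b) * ennreal (poisson_weight m k)
          + ennreal (t powr b / t ^ q) * ennreal (poisson_weight m k * (real k + (a + real q)) ^ q)"
      using t a w[of k] by (simp add: ennreal_mult'[symmetric] ennreal_plus[symmetric] del: ennreal_plus)
  qed auto
  also have "\<dots> = ennreal (t powr b) * (\<Sum>k. ennreal (poisson_weight m k))
      + ennreal (t powr b / t ^ q) * (\<Sum>k. ennreal (poisson_weight m k * (real k + (a + real q)) ^ q))"
    by (simp add: suminf_add[symmetric])
  also have "\<dots> \<le> ennreal (t powr b) * 1 + ennreal (t powr b / t ^ q) * ennreal (t ^ q)"
    using a suminf_poisson_weight_power_le[OF m, of "a + real q" q]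
    by (intro add_mono mult_left_mono) (simp_all add: suminf_poisson_weight[OF m] t_def add_ac)
  also have "\<dots> = ennreal (2 * t powr b)"
    using t by (simp add: ennreal_mult'[symmetric] ennreal_plus[symmetric] del: ennreal_plus)
  finally show ?thesis
    by (simp add: t_def)
qed

lemma powr_add_le:
  fixes m C b :: real
  assumes m: "0 \<le> m" and C: "0 \<le> C" and b: "0 \<le> b"
  shows "(m + C) powr b \<le> 2 powr b * max 1 (C powr b) * (1 + m powr b)"
proof -
  have "(m + C) powr b \<le> (2 * max m C) powr b"
    using m C b by (intro powr_mono2) auto
  also have "\<dots> = 2 powr b * max m C powr b"
    using m C by (simp add: powr_mult)
  also have "max m C powr b \<le> m powr b + C powr b"
    by (simp add: max_def)
  also have "\<dots> \<le> max 1 (C powr b) * (1 + m powr b)"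
    using mult_right_mono[of 1 "max 1 (C powr b)" "m powr b"] by (simp add: algebra_simps)
  finally show ?thesis
    by (simp add: mult_left_mono mult.assoc)
qed

lemma suminf_poisson_weight_Gamma_ratio_bound:
  assumes a: "0 < a" and ab: "0 < a + b"
  obtains D where "0 \<le> D" and "\<And>m. 0 \<le> m \<Longrightarrow>
    (\<Sum>k. ennreal (poisson_weight m k * (Gamma (a + real k + b) / Gamma (a + real k))))
      \<le> ennreal (D * (1 + m powr b))"
proof (cases "b \<le> 0")
  case True
  define D where "D = Gamma (a + b) / Gamma a"
  have D: "0 \<le> D"
    using a ab by (simp add: D_def)
  have ratio: "Gamma (a + real k + b) / Gamma (a + real k) \<le> D" for k
  proof -
    have "pochhammer (a + b) k \<le> pochhammer a k"
      unfolding pochhammer_prod using True ab by (intro prod_mono) auto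
    then have "pochhammer (a + b) k / pochhammer a k \<le> 1"
      using a by (simp add: pochhammer_pos)
    then show ?thesis
      unfolding Gamma_ratio_shift[OF a ab] D_def[symmetric] using D by (rule mult_left_le)
  qed
  show ?thesis
  proof (rule that)
    show "0 \<le> D"
      by (rule D)
    fix m :: real assume m: "0 \<le> m"
    have "(\<Sum>k. ennreal (poisson_weight m k * (Gamma (a + real k + b) / Gamma (a + real k))))
        \<le> (\<Sum>k. ennreal (poisson_weight m k) * ennreal D)"
    proof (rule suminf_le)
      fix k
      show "ennreal (poisson_weight m k * (Gamma (a + real k + b) / Gamma (a + real k)))
          \<le> ennreal (poisson_weight m k) * ennreal D"
        using mult_left_mono[OF ratio poisson_weight_nonneg[OF m]] poisson_weight_nonneg[OF m, of k]
        by (simp add: ennreal_mult'[symmetric] ennreal_leI)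
    qed auto
    also have "\<dots> = ennreal D"
      by (simp add: suminf_poisson_weight[OF m])
    also have "\<dots> \<le> ennreal (D * (1 + m powr b))"
      using D by (intro ennreal_leI) (simp add: mult_le_cancel_left1)
    finally show "(\<Sum>k. ennreal (poisson_weight m k * (Gamma (a + real k + b) / Gamma (a + real k))))
        \<le> ennreal (D * (1 + m powr b))" .
  qed
next
  case False
  define q where "q = nat \<lceil>b\<rceil>"
  define C where "C = a + 2 * real q"
  have b: "0 \<le> b" "b \<le> real q"
    using False by (auto simp: q_def)
  show ?thesis
  proof (rule that[of "2 * (2 powr b * max 1 (C powr b))"])
    fix m :: real assume m: "0 \<le> m"
    have "(m + C) powr b \<le> 2 powr b * max 1 (C powr b) * (1 + m powr b)"
      using a m b by (intro powr_add_le) (auto simp: C_def)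
    then show "(\<Sum>k. ennreal (poisson_weight m k * (Gamma (a + real k + b) / Gamma (a + real k))))
        \<le> ennreal (2 * (2 powr b * max 1 (C powr b)) * (1 + m powr b))"
      using suminf_poisson_weight_Gamma_ratio_le_powr[OF a b m]
      by (elim order_trans) (simp add: C_def add.assoc ennreal_leI)
  qed simp
qed

lemma poisson_weight_Gamma_ratio_sums:
  assumes a: "0 < a" and ab: "0 < a + b" and m: "0 \<le> m"
  shows "(\<lambda>k. poisson_weight m k * (Gamma (a + real k + b) / Gamma (a + real k)))
           sums (Gamma (a + b) / Gamma a * (exp (- m) * kummer_1F1 (a + b) a m))"
proof -
  define K where "K = Gamma (a + b) / Gamma a * exp (- m)"
  define t where "t k = pochhammer (a + b) k / pochhammer a k * m ^ k / fact k" for k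
  have K: "0 < K"
    using a ab by (simp add: K_def)
  have summand: "poisson_weight m k * (Gamma (a + real k + b) / Gamma (a + real k)) = K * t k" for k
    by (simp add: Gamma_ratio_shift[OF a ab] poisson_weight_def K_def t_def mult_ac)
  obtain D where D: "\<And>m. 0 \<le> m \<Longrightarrow>
      (\<Sum>k. ennreal (poisson_weight m k * (Gamma (a + real k + b) / Gamma (a + real k)))) \<le> ennreal (D * (1 + m powr b))"
    using suminf_poisson_weight_Gamma_ratio_bound[OF a ab] by blast
  have "(\<Sum>k. ennreal (K * t k)) \<le> ennreal (D * (1 + m powr b))"
    using D[OF m] unfolding summand .
  then have "(\<Sum>k. ennreal (K * t k)) \<noteq> \<top>"
    using ennreal_less_top[of "D * (1 + m powr b)"] by (auto simp: top_unique)
  moreover have "0 \<le> K * t k" for k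
    unfolding t_def using K a ab m
    by (intro mult_nonneg_nonneg divide_nonneg_nonneg) (simp_all add: less_imp_le pochhammer_pos)
  ultimately have "summable (\<lambda>k. K * t k)"
    by (intro summable_suminf_not_top)
  then have "summable t"
    using K by simp
  moreover have "kummer_1F1 (a + b) a m = suminf t"
    unfolding kummer_1F1_def t_def ..
  ultimately have "t sums kummer_1F1 (a + b) a m"
    by (simp add: summable_sums)
  from sums_mult[OF this, of K] show ?thesis
    unfolding summand by (simp add: K_def mult.assoc)
qed

lemma exp_kummer_1F1_bound:
  assumes a: "0 < a" and ab: "0 < a + b"
  obtains D where "0 \<le> D"
    and "\<And>m. 0 \<le> m \<Longrightarrow> 0 \<le> Gamma (a + b) / Gamma a * (exp (- m) * kummer_1F1 (a + b) a m)"
    and "\<And>m. 0 \<le> m \<Longrightarrow> Gamma (a + b) / Gamma a * (exp (- m) * kummer_1F1 (a + b) a m) \<le> D * (1 + m powr b)"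
proof -
  obtain D where "0 \<le> D" and D: "\<And>m. 0 \<le> m \<Longrightarrow>
      (\<Sum>k. ennreal (poisson_weight m k * (Gamma (a + real k + b) / Gamma (a + real k)))) \<le> ennreal (D * (1 + m powr b))"
    using suminf_poisson_weight_Gamma_ratio_bound[OF a ab] by blast
  have summand_nonneg: "0 \<le> poisson_weight m k * (Gamma (a + real k + b) / Gamma (a + real k))" if "0 \<le> m" for m k
    using a ab that by (simp add: poisson_weight_nonneg)
  show ?thesis
  proof (rule that[OF \<open>0 \<le> D\<close>])
    fix m :: real assume m: "0 \<le> m"
    note sums = poisson_weight_Gamma_ratio_sums[OF a ab m]
    show "0 \<le> Gamma (a + b) / Gamma a * (exp (- m) * kummer_1F1 (a + b) a m)"
      using sums_le[of "\<lambda>_. 0" _ 0, OF _ sums_zero sums] summand_nonneg[OF m] by simp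
    show "Gamma (a + b) / Gamma a * (exp (- m) * kummer_1F1 (a + b) a m) \<le> D * (1 + m powr b)"
      using D[OF m] \<open>0 \<le> D\<close> unfolding suminf_ennreal_eq[OF summand_nonneg[OF m] sums] by simp
  qed
qed

section \<open>The smart path law\<close>

text \<open>\<open>M \<bind> f\<close> sees \<open>f\<close> only through preimages of sets of subprobability measures, so points
  where \<open>f x\<close> is not a subprobability measure are invisible: on a null set of such points \<open>f\<close> need
  not agree with the kernel \<open>g\<close>.\<close>
lemma bind_cong_null_set:
  assumes g: "g \<in> M \<rightarrow>\<^sub>M subprob_algebra B" and ne: "space M \<noteq> {}"
    and Z: "Z \<in> null_sets M"
    and fg: "\<And>x. x \<in> space M - Z \<Longrightarrow> f x = g x"
    and fZ: "\<And>x. x \<in> Z \<Longrightarrow> f x \<notin> space (subprob_algebra B)"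
    and sets_f: "\<And>x. x \<in> space M \<Longrightarrow> sets (f x) = sets B"
  shows "M \<bind> f = M \<bind> g"
proof -
  let ?x = "SOME x. x \<in> space M"
  have "?x \<in> space M"
    using ne by (simp add: some_in_eq)
  then have "M \<bind> f = join (distr M (subprob_algebra B) f)"
    using ne by (simp add: bind_nonempty sets_f cong: subprob_algebra_cong)
  also have "distr M (subprob_algebra B) f = distr M (subprob_algebra B) g"
    unfolding distr_def
  proof (rule measure_of_eq)
    show "sets (subprob_algebra B) \<subseteq> Pow (space (subprob_algebra B))"
      by (rule sets.space_closed)
    fix A assume "A \<in> sigma_sets (space (subprob_algebra B)) (sets (subprob_algebra B))"
    then have A: "A \<in> sets (subprob_algebra B)"
      by (simp add: sets.sigma_sets_eq)
    have "f -` A \<inter> space M = (g -` A \<inter> space M) - Z"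
    proof (intro set_eqI iffI)
      fix x assume x: "x \<in> f -` A \<inter> space M"
      then have "x \<notin> Z"
        using fZ sets.sets_into_space[OF A] by blast
      with x fg[of x] show "x \<in> (g -` A \<inter> space M) - Z"
        by auto
    next
      fix x assume "x \<in> (g -` A \<inter> space M) - Z"
      with fg[of x] show "x \<in> f -` A \<inter> space M"
        by auto
    qed
    then show "emeasure M (f -` A \<inter> space M) = emeasure M (g -` A \<inter> space M)"
      using emeasure_Diff_null_set[OF Z measurable_sets[OF g A]] by simp
  qed
  also have "join (distr M (subprob_algebra B) g) = M \<bind> g"
    by (rule bind_nonempty''[OF g ne, symmetric])
  finally show ?thesis .
qed

lemma integrable_and_integral_eq_of_nn_integral_eq:
  fixes f g :: "_ \<Rightarrow> real"
  assumes f: "f \<in> borel_measurable N" and f_nonneg: "AE x in N. 0 \<le> f x"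
    and g: "integrable P g" and g_nonneg: "AE x in P. 0 \<le> g x"
    and eq: "(\<integral>\<^sup>+x. ennreal (f x) \<partial>N) = (\<integral>\<^sup>+x. ennreal (g x) \<partial>P)"
  shows "integrable N f" and "integral\<^sup>L N f = integral\<^sup>L P g"
proof -
  have g_nn: "(\<integral>\<^sup>+x. ennreal (g x) \<partial>P) = ennreal (integral\<^sup>L P g)"
    by (rule nn_integral_eq_integral[OF g g_nonneg])
  show int_f: "integrable N f"
    using f f_nonneg by (rule integrableI_nonneg) (simp add: eq g_nn)
  have "ennreal (integral\<^sup>L N f) = ennreal (integral\<^sup>L P g)"
    using nn_integral_eq_integral[OF int_f f_nonneg] by (simp add: eq g_nn)
  then show "integral\<^sup>L N f = integral\<^sup>L P g"
    using integral_nonneg_AE[OF f_nonneg] integral_nonneg_AE[OF g_nonneg] by simp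
qed

definition poisson_gamma_mixture :: "real \<Rightarrow> real \<Rightarrow> real \<Rightarrow> real measure" where
  "poisson_gamma_mixture a r m = poisson_measure m \<bind> (\<lambda>k. gamma_measure (a + real k) r)"

lemma measurable_gamma_measure_shift:
  assumes "sets N = sets (count_space UNIV)" and "0 < a" and "0 < r"
  shows "(\<lambda>k. gamma_measure (a + real k) r) \<in> N \<rightarrow>\<^sub>M subprob_algebra borel"
  using assms by (simp add: measurable_cong_sets[OF assms(1) refl] gamma_measure_in_subprob_algebra)

lemma sets_poisson_gamma_mixture [simp, measurable_cong]:
  "0 < a \<Longrightarrow> 0 < r \<Longrightarrow> sets (poisson_gamma_mixture a r m) = sets borel"
  unfolding poisson_gamma_mixture_def
  by (rule sets_bind_measurable[OF measurable_gamma_measure_shift]) simp_all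

lemma emeasure_poisson_gamma_mixture_UNIV:
  assumes "0 < a" and "0 < r"
  shows "emeasure (poisson_gamma_mixture a r m) UNIV = emeasure (poisson_measure m) UNIV"
proof -
  have "emeasure (gamma_measure (a + real k) r) UNIV = 1" for k
    using prob_space.emeasure_space_1[OF prob_space_gamma_measure[of "a + real k" r]] assms by simp
  then show ?thesis
    unfolding poisson_gamma_mixture_def using assms
    by (simp add: emeasure_bind[OF _ measurable_gamma_measure_shift])
qed

lemma poisson_gamma_mixture_not_subprob:
  assumes "0 < a" and "0 < r" and "m < 0"
  shows "poisson_gamma_mixture a r m \<notin> space (subprob_algebra borel)"
proof
  assume "poisson_gamma_mixture a r m \<in> space (subprob_algebra borel)"
  then have "emeasure (poisson_gamma_mixture a r m) UNIV \<le> 1"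
    using subprob_space.subprob_emeasure_le_1 by (auto simp: space_subprob_algebra)
  with assms emeasure_poisson_measure_gt_1[of m] show False
    by (simp add: emeasure_poisson_gamma_mixture_UNIV)
qed

lemma measurable_poisson_gamma_mixture:
  assumes "f \<in> borel_measurable M" and "\<And>x. x \<in> space M \<Longrightarrow> 0 \<le> f x" and "0 < a" and "0 < r"
  shows "(\<lambda>x. poisson_gamma_mixture a r (f x)) \<in> M \<rightarrow>\<^sub>M subprob_algebra borel"
  unfolding poisson_gamma_mixture_def using assms
  by (intro measurable_bind2[OF measurable_poisson_measure measurable_gamma_measure_shift]) auto

lemma nn_integral_poisson_gamma_mixture_powr:
  assumes a: "0 < a" and r: "0 < r" and ab: "0 < a + b" and m: "0 \<le> m"
  shows "(\<integral>\<^sup>+u. ennreal (u powr b) \<partial>poisson_gamma_mixture a r m)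
       = ennreal (r powr (- b) * (Gamma (a + b) / Gamma a * (exp (- m) * kummer_1F1 (a + b) a m)))"
proof -
  have w: "0 \<le> poisson_weight m k" for k
    using m by (rule poisson_weight_nonneg)
  have "(\<integral>\<^sup>+u. ennreal (u powr b) \<partial>poisson_gamma_mixture a r m)
      = (\<Sum>k. ennreal (poisson_weight m k) * ennreal (r powr (- b) * Gamma (a + real k + b) / Gamma (a + real k)))"
    unfolding poisson_gamma_mixture_def using a r ab
    by (simp add: nn_integral_bind[OF _ measurable_gamma_measure_shift] nn_integral_poisson_measure
        nn_integral_gamma_measure_powr add_ac)
  also have "\<dots> = ennreal (r powr (- b)) * (\<Sum>k. ennreal (poisson_weight m k * (Gamma (a + real k + b) / Gamma (a + real k))))"
  proof -
    have "ennreal (poisson_weight m k) * ennreal (r powr (- b) * Gamma (a + real k + b) / Gamma (a + real k))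
        = ennreal (r powr (- b)) * ennreal (poisson_weight m k * (Gamma (a + real k + b) / Gamma (a + real k)))" for k
      using w[of k] by (simp add: ennreal_mult'[symmetric] ennreal_mult''[symmetric] mult_ac)
    then show ?thesis
      by (simp only: ennreal_suminf_cmult)
  qed
  also have "\<dots> = ennreal (r powr (- b)) * ennreal (Gamma (a + b) / Gamma a * (exp (- m) * kummer_1F1 (a + b) a m))"
    using a ab w by (subst suminf_ennreal_eq[OF _ poisson_weight_Gamma_ratio_sums[OF a ab m]]) simp_all
  finally show ?thesis
    by (simp add: ennreal_mult'[symmetric])
qed

lemma smart_path_kernel_eq_gamma_measure:
  assumes a: "0 < \<alpha>" and l: "0 < lam" and t0: "0 < \<tau>" and t1: "\<tau> < 1"
  shows "(if k = 0 then return borel 0 else gamma_measure (real k) (lam * \<tau> / (1 - \<tau>)))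
           \<bind> (\<lambda>y. gamma_measure \<alpha> lam \<bind> (\<lambda>g. return borel ((1 - \<tau>) * g + \<tau> * y)))
       = gamma_measure (\<alpha> + real k) (lam / (1 - \<tau>))"
proof -
  define r where "r = lam / (1 - \<tau>)"
  have r: "0 < r"
    using l t1 by (simp add: r_def)
  have lam: "lam = (1 - \<tau>) * r" and rate: "lam * \<tau> / (1 - \<tau>) = \<tau> * r"
    using t1 by (simp_all add: r_def)
  have goal: "gamma_measure (\<alpha> + real k) (lam / (1 - \<tau>)) = gamma_measure (\<alpha> + real k) r"
    by (simp add: r_def)
  show ?thesis
  proof (cases "k = 0")
    case True
    have "(\<lambda>y. gamma_measure \<alpha> lam \<bind> (\<lambda>g. return borel ((1 - \<tau>) * g + \<tau> * y))) \<in> borel \<rightarrow>\<^sub>M subprob_algebra borel"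
      using a l by (intro measurable_bind[OF measurable_const[OF gamma_measure_in_subprob_algebra]]) auto
    then have "return borel 0 \<bind> (\<lambda>y. gamma_measure \<alpha> lam \<bind> (\<lambda>g. return borel ((1 - \<tau>) * g + \<tau> * y)))
        = gamma_measure \<alpha> ((1 - \<tau>) * r) \<bind> (\<lambda>g. return borel ((1 - \<tau>) * g))"
      by (subst bind_return) (simp_all add: lam[symmetric])
    with True t1 r show ?thesis
      unfolding goal by (simp add: bind_gamma_measure_return_mult)
  next
    case False
    have "gamma_measure (real k) (\<tau> * r) \<bind> (\<lambda>y. gamma_measure \<alpha> ((1 - \<tau>) * r) \<bind> (\<lambda>g. return borel ((1 - \<tau>) * g + \<tau> * y)))
        = gamma_measure (\<alpha> + real k) r"
      using False a t0 t1 r by (intro bind_gamma_measure_affine) auto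
    with False show ?thesis
      unfolding goal by (simp only: lam[symmetric] rate[symmetric] if_False)
  qed
qed

text \<open>For \<open>x < 0\<close> the Poisson measure inside \<open>smart_path_law\<close> has mass \<open>> 1\<close>, so that kernel is not
  measurable; clamping \<open>x\<close> at \<open>0\<close> gives a kernel that agrees with it almost surely.\<close>
lemma smart_path_law_eq_mixture:
  assumes a: "0 < \<alpha>" and l: "0 < lam" and t0: "0 < \<tau>" and t1: "\<tau> < 1"
    and sets_PX: "sets PX = sets borel" and nonneg: "AE x in PX. 0 \<le> x"
  shows "smart_path_law \<alpha> lam \<tau> PX
       = PX \<bind> (\<lambda>x. poisson_gamma_mixture \<alpha> (lam / (1 - \<tau>)) (lam * \<tau> * max x 0 / (1 - \<tau>)))"
proof -
  have r: "0 < lam / (1 - \<tau>)"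
    using l t1 by simp
  have space_PX: "space PX = UNIV"
    using sets_eq_imp_space_eq[OF sets_PX] by simp
  have "smart_path_law \<alpha> lam \<tau> PX
      = PX \<bind> (\<lambda>x. poisson_gamma_mixture \<alpha> (lam / (1 - \<tau>)) (lam * \<tau> * x / (1 - \<tau>)))"
    unfolding smart_path_law_def poisson_gamma_mixture_def
    by (intro bind_cong_All) (simp add: smart_path_kernel_eq_gamma_measure[OF a l t0 t1])
  also have "\<dots> = PX \<bind> (\<lambda>x. poisson_gamma_mixture \<alpha> (lam / (1 - \<tau>)) (lam * \<tau> * max x 0 / (1 - \<tau>)))"
  proof (rule bind_cong_null_set[where Z = "{x. x < 0}" and B = borel])
    show "(\<lambda>x. poisson_gamma_mixture \<alpha> (lam / (1 - \<tau>)) (lam * \<tau> * max x 0 / (1 - \<tau>)))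
        \<in> PX \<rightarrow>\<^sub>M subprob_algebra borel"
      using a r l t0 t1 by (intro measurable_poisson_gamma_mixture) (auto simp: measurable_cong_sets[OF sets_PX refl])
    show "{x. x < 0} \<in> null_sets PX"
    proof (subst AE_iff_null_sets)
      show "{x. x < 0} \<in> sets PX"
        unfolding sets_PX by measurable
      show "AE x in PX. x \<notin> {x. x < 0}"
        using nonneg by eventually_elim simp
    qed
    show "poisson_gamma_mixture \<alpha> (lam / (1 - \<tau>)) (lam * \<tau> * x / (1 - \<tau>)) \<notin> space (subprob_algebra borel)"
      if "x \<in> {x. x < 0}" for x
      using that a r l t0 t1 by (intro poisson_gamma_mixture_not_subprob) (auto intro!: divide_neg_pos mult_pos_neg)
  qed (use a r space_PX in auto)
  finally show ?thesis .
qed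

text \<open>The conditional moment \<open>E[X\<^sub>\<tau> powr \<beta> | X = x]\<close>.\<close>
definition smart_path_moment :: "real \<Rightarrow> real \<Rightarrow> real \<Rightarrow> real \<Rightarrow> real \<Rightarrow> real" where
  "smart_path_moment \<alpha> lam \<beta> \<tau> x =
     (lam / (1 - \<tau>)) powr (- \<beta>) * (Gamma (\<alpha> + \<beta>) / Gamma \<alpha>) *
     (exp (- lam * \<tau> * x / (1 - \<tau>)) * kummer_1F1 (\<alpha> + \<beta>) \<alpha> (lam * \<tau> * x / (1 - \<tau>)))"

lemma smart_path_moment_bound:
  assumes a: "0 < \<alpha>" and l: "0 < lam" and ab: "0 < \<alpha> + \<beta>" and t0: "0 < \<tau>" and t1: "\<tau> < 1"
  obtains C where "\<And>x. 0 \<le> x \<Longrightarrow> 0 \<le> smart_path_moment \<alpha> lam \<beta> \<tau> x"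
    and "\<And>x. 0 \<le> x \<Longrightarrow> smart_path_moment \<alpha> lam \<beta> \<tau> x \<le> C * (1 + x powr \<beta>)"
proof -
  define r where "r = (lam / (1 - \<tau>)) powr (- \<beta>)"
  define c where "c = lam * \<tau> / (1 - \<tau>)"
  have c: "0 < c"
    using l t0 t1 by (simp add: c_def)
  obtain D where D: "0 \<le> D"
    and G_nonneg: "\<And>m. 0 \<le> m \<Longrightarrow> 0 \<le> Gamma (\<alpha> + \<beta>) / Gamma \<alpha> * (exp (- m) * kummer_1F1 (\<alpha> + \<beta>) \<alpha> m)"
    and G_le: "\<And>m. 0 \<le> m \<Longrightarrow>
      Gamma (\<alpha> + \<beta>) / Gamma \<alpha> * (exp (- m) * kummer_1F1 (\<alpha> + \<beta>) \<alpha> m) \<le> D * (1 + m powr \<beta>)"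
    using exp_kummer_1F1_bound[OF a ab] by blast
  have eq: "smart_path_moment \<alpha> lam \<beta> \<tau> x
      = r * (Gamma (\<alpha> + \<beta>) / Gamma \<alpha> * (exp (- (c * x)) * kummer_1F1 (\<alpha> + \<beta>) \<alpha> (c * x)))" for x
    by (simp add: smart_path_moment_def r_def c_def mult.assoc)
  show ?thesis
  proof (rule that[of "r * D * max 1 (c powr \<beta>)"])
    fix x :: real assume "0 \<le> x"
    then have m: "0 \<le> c * x" and mx: "(c * x) powr \<beta> = c powr \<beta> * x powr \<beta>"
      using c by (simp_all add: powr_mult)
    show "0 \<le> smart_path_moment \<alpha> lam \<beta> \<tau> x"
      unfolding eq r_def using G_nonneg[OF m] by (rule mult_nonneg_nonneg[OF powr_ge_zero])
    have "1 + c powr \<beta> * x powr \<beta> \<le> max 1 (c powr \<beta>) + max 1 (c powr \<beta>) * x powr \<beta>"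
      by (intro add_mono mult_right_mono) auto
    then have "1 + c powr \<beta> * x powr \<beta> \<le> max 1 (c powr \<beta>) * (1 + x powr \<beta>)"
      by (simp add: algebra_simps)
    then have "D * (1 + (c * x) powr \<beta>) \<le> D * (max 1 (c powr \<beta>) * (1 + x powr \<beta>))"
      unfolding mx using D by (rule mult_left_mono)
    with G_le[OF m] have "smart_path_moment \<alpha> lam \<beta> \<tau> x \<le> r * (D * (max 1 (c powr \<beta>) * (1 + x powr \<beta>)))"
      unfolding eq r_def by (intro mult_left_mono) auto
    then show "smart_path_moment \<alpha> lam \<beta> \<tau> x \<le> r * D * max 1 (c powr \<beta>) * (1 + x powr \<beta>)"
      by (simp add: mult.assoc)
  qed
qed

lemma integrable_smart_path_moment:
  assumes a: "0 < \<alpha>" and l: "0 < lam" and ab: "0 < \<alpha> + \<beta>" and t0: "0 < \<tau>" and t1: "\<tau> < 1"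
    and "prob_space PX" and sets_PX: "sets PX = sets borel" and pos: "AE x in PX. 0 < x"
    and "integrable PX (\<lambda>x. x powr \<beta>)"
  shows "integrable PX (smart_path_moment \<alpha> lam \<beta> \<tau>)"
proof -
  interpret prob_space PX
    by fact
  obtain C where nonneg: "\<And>x. 0 \<le> x \<Longrightarrow> 0 \<le> smart_path_moment \<alpha> lam \<beta> \<tau> x"
    and le: "\<And>x. 0 \<le> x \<Longrightarrow> smart_path_moment \<alpha> lam \<beta> \<tau> x \<le> C * (1 + x powr \<beta>)"
    using smart_path_moment_bound[OF a l ab t0 t1] by blast
  show ?thesis
  proof (rule Bochner_Integration.integrable_bound)
    show "integrable PX (\<lambda>x. C * (1 + x powr \<beta>))"
      using \<open>integrable PX (\<lambda>x. x powr \<beta>)\<close>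
      by (intro integrable_mult_right Bochner_Integration.integrable_add integrable_const)
    show "smart_path_moment \<alpha> lam \<beta> \<tau> \<in> borel_measurable PX"
      unfolding smart_path_moment_def[abs_def] kummer_1F1_def measurable_cong_sets[OF sets_PX refl]
      by measurable
    show "AE x in PX. norm (smart_path_moment \<alpha> lam \<beta> \<tau> x) \<le> norm (C * (1 + x powr \<beta>))"
      using pos
    proof eventually_elim
      case (elim x)
      then have "norm (smart_path_moment \<alpha> lam \<beta> \<tau> x) \<le> C * (1 + x powr \<beta>)"
        using nonneg[of x] le[of x] by simp
      then show ?case
        by (rule order_trans) (simp only: real_norm_def abs_ge_self)
    qed
  qed
qed

lemma nn_integral_smart_path_law_powr:
  assumes a: "0 < \<alpha>" and l: "0 < lam" and ab: "0 < \<alpha> + \<beta>" and t0: "0 < \<tau>" and t1: "\<tau> < 1"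
    and sets_PX: "sets PX = sets borel" and pos: "AE x in PX. 0 < x"
  shows "sets (smart_path_law \<alpha> lam \<tau> PX) = sets borel"
    and "(\<integral>\<^sup>+u. ennreal (u powr \<beta>) \<partial>smart_path_law \<alpha> lam \<tau> PX)
       = (\<integral>\<^sup>+x. ennreal (smart_path_moment \<alpha> lam \<beta> \<tau> x) \<partial>PX)"
proof -
  let ?N = "\<lambda>x. poisson_gamma_mixture \<alpha> (lam / (1 - \<tau>)) (lam * \<tau> * max x 0 / (1 - \<tau>))"
  have r: "0 < lam / (1 - \<tau>)"
    using l t1 by simp
  have law: "smart_path_law \<alpha> lam \<tau> PX = PX \<bind> ?N"
  proof (rule smart_path_law_eq_mixture[OF a l t0 t1 sets_PX])
    show "AE x in PX. 0 \<le> x"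
      using pos by eventually_elim simp
  qed
  have N: "?N \<in> PX \<rightarrow>\<^sub>M subprob_algebra borel"
    using a l t0 t1 by (intro measurable_poisson_gamma_mixture) (auto simp: measurable_cong_sets[OF sets_PX refl])
  show "sets (smart_path_law \<alpha> lam \<tau> PX) = sets borel"
    unfolding law by (rule sets_bind_measurable[OF N]) (simp add: sets_eq_imp_space_eq[OF sets_PX])
  have "AE x in PX. (\<integral>\<^sup>+u. ennreal (u powr \<beta>) \<partial>?N x) = ennreal (smart_path_moment \<alpha> lam \<beta> \<tau> x)"
    using pos
  proof eventually_elim
    case (elim x)
    then have "0 \<le> lam * \<tau> * x / (1 - \<tau>)"
      using l t0 t1 by simp
    from nn_integral_poisson_gamma_mixture_powr[OF a r ab this] elim show ?case
      by (simp add: smart_path_moment_def mult.assoc)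
  qed
  then show "(\<integral>\<^sup>+u. ennreal (u powr \<beta>) \<partial>smart_path_law \<alpha> lam \<tau> PX)
      = (\<integral>\<^sup>+x. ennreal (smart_path_moment \<alpha> lam \<beta> \<tau> x) \<partial>PX)"
    unfolding law by (simp add: nn_integral_bind[OF _ N] nn_integral_cong_AE)
qed

theorem lemma2p6:
  fixes M :: "'a measure" and X :: "'a \<Rightarrow> real"
    and \<alpha> lam \<beta> \<tau> :: real
  assumes "prob_space M"
    and "\<alpha> > 0" and "lam > 0" and "\<alpha> + \<beta> > 0"
    and "X \<in> borel_measurable M"
    and "\<forall>\<omega>\<in>space M. X \<omega> > 0"
    and "integrable M (\<lambda>\<omega>. X \<omega> powr \<beta>)"
    and "0 < \<tau>" and "\<tau> < 1"
  shows "integrable (smart_path_law \<alpha> lam \<tau> (distr M borel X)) (\<lambda>u. u powr \<beta>)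
    \<and> (\<integral>u. u powr \<beta> \<partial>smart_path_law \<alpha> lam \<tau> (distr M borel X)) =
        (lam / (1 - \<tau>)) powr (- \<beta>) * (Gamma (\<alpha> + \<beta>) / Gamma \<alpha>) *
        (\<integral>x. exp (- lam * \<tau> * x / (1 - \<tau>)) *
              kummer_1F1 (\<alpha> + \<beta>) \<alpha> (lam * \<tau> * x / (1 - \<tau>)) \<partial>distr M borel X)"
proof -
  note params = assms(2-4,8,9)
  interpret prob_space M
    by fact
  define PX where "PX = distr M borel X"
  have sets_PX: "sets PX = sets borel"
    by (simp add: PX_def)
  have pos: "AE x in PX. 0 < x"
    unfolding PX_def using assms(5,6) by (subst AE_distr_iff) auto
  have "prob_space PX" and "integrable PX (\<lambda>x. x powr \<beta>)"
    unfolding PX_def using assms(5,7) by (simp_all add: prob_space_distr integrable_distr_eq)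
  note moment = integrable_smart_path_moment[OF params this(1) sets_PX pos this(2)]
  note law = nn_integral_smart_path_law_powr[OF params sets_PX pos]
  have "(\<lambda>u. u powr \<beta>) \<in> borel_measurable (smart_path_law \<alpha> lam \<tau> PX)"
    by (simp add: measurable_cong_sets[OF law(1) refl])
  moreover have "AE u in smart_path_law \<alpha> lam \<tau> PX. 0 \<le> u powr \<beta>"
    by simp
  moreover have "AE x in PX. 0 \<le> smart_path_moment \<alpha> lam \<beta> \<tau> x"
    using pos
  proof eventually_elim
    case (elim x)
    show ?case
      by (rule smart_path_moment_bound[OF params]) (use elim in simp)
  qed
  ultimately have "integrable (smart_path_law \<alpha> lam \<tau> PX) (\<lambda>u. u powr \<beta>)"
    and "(\<integral>u. u powr \<beta> \<partial>smart_path_law \<alpha> lam \<tau> PX) = (\<integral>x. smart_path_moment \<alpha> lam \<beta> \<tau> x \<partial>PX)"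
    using integrable_and_integral_eq_of_nn_integral_eq[OF _ _ moment _ law(2)] by blast+
  then show ?thesis
    unfolding smart_path_moment_def PX_def by simp
qed

end
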